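(* Let $T=\begin{pmatrix}1&1\\0&1\end{pmatrix}\in\mathsf{SL}(2,\mathbb{Z})$. For every integer $k\ge1$, $T^{12k}=\begin{pmatrix}1&12k\\0&1\end{pmatrix}$ can be written as a product of $k+1$ commutators of elements of $\mathsf{SL}(2,\mathbb{Z})$.
   Context: $[X,Y]=XYX^{-1}Y^{-1}$. *)

theory Defs
  imports "HOL-Analysis.Analysis"
begin

type_synonym mat2 = "int^2^2"

definition SL2Z :: "mat2 set" where
  "SL2Z = {A. det A = 1}"

definition mat2_of :: "int \<Rightarrow> int \<Rightarrow> int \<Rightarrow> int \<Rightarrow> mat2" where
  "mat2_of a b c d = (\<chi> i j. if i = 1 then (if j = 1 then a else b)
                              else (if j = 1 then c else d))"

definition Tmat :: mat2 where
  "Tmat = mat2_of 1 1 0 1"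

definition matpow :: "mat2 \<Rightarrow> nat \<Rightarrow> mat2" where
  "matpow A n = (((**) A) ^^ n) (mat 1)"

definition commutator :: "mat2 \<Rightarrow> mat2 \<Rightarrow> mat2" where
  "commutator X Y = X ** Y ** matrix_inv X ** matrix_inv Y"

definition mprod :: "mat2 list \<Rightarrow> mat2" where
  "mprod xs = foldr (**) xs (mat 1)"

end

theory Submission
  imports Defs
begin

text \<open>
  With \<open>P = [[1,1],[1,2]]\<close> and \<open>S = [[0,-1],[1,0]]\<close> one has \<open>P S P = S\<close>, i.e.
  \<open>S\<close> conjugates \<open>P\<close> to its inverse, so every even power \<open>P\<^sup>2\<^sup>k = [P\<^sup>k, S]\<close> is a commutator.
  Moreover \<open>T\<^sup>1\<^sup>2 P\<^sup>-\<^sup>2\<close> is a single commutator \<open>C = [X, Y]\<close> of explicit matrices, so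
  \<open>T\<^sup>1\<^sup>2 = C Q\<close> with \<open>Q = P\<^sup>2\<close>. Now \<open>(C Q)\<^sup>k = C (Q C Q\<^sup>-\<^sup>1) \<dots> (Q\<^sup>k\<^sup>-\<^sup>1 C Q\<^sup>1\<^sup>-\<^sup>k) Q\<^sup>k\<close>
  is a product of \<open>k\<close> conjugates of \<open>C\<close>, each again a commutator, followed by the
  commutator \<open>Q\<^sup>k = [P\<^sup>k, S]\<close>.
\<close>

lemma matrix_inv_unique:
  fixes A :: "'a::semiring_1^'n^'n"
  assumes "A ** B = mat 1" and "B ** A = mat 1"
  shows "matrix_inv A = B"
  unfolding matrix_inv_def
proof (rule some_equality)
  show "A ** B = mat 1 \<and> B ** A = mat 1" using assms ..
  fix B' assume B': "A ** B' = mat 1 \<and> B' ** A = mat 1"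
  then have "B' = (B' ** A) ** B"
    using assms(1) by (metis matrix_mul_assoc matrix_mul_rid)
  then show "B' = B" using B' by simp
qed

lemma matrix_inv_right:
  fixes A :: "'a::semiring_1^'n^'n"
  assumes "invertible A"
  shows "A ** matrix_inv A = mat 1"
  using assms unfolding invertible_def matrix_inv_def by (rule someI_ex[THEN conjunct1])

lemma matrix_inv_left:
  fixes A :: "'a::semiring_1^'n^'n"
  assumes "invertible A"
  shows "matrix_inv A ** A = mat 1"
  using assms unfolding invertible_def matrix_inv_def by (rule someI_ex[THEN conjunct2])

lemma det_mul_det_matrix_inv:
  fixes A :: "'a::comm_ring_1^'n^'n"
  assumes "invertible A"
  shows "det A * det (matrix_inv A) = 1"
  by (metis assms det_I det_mul matrix_inv_right)

definition conj_by :: "'a::semiring_1^'n^'n \<Rightarrow> 'a^'n^'n \<Rightarrow> 'a^'n^'n" where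
  "conj_by Q X = Q ** X ** matrix_inv Q"

lemma conj_by_mult:
  fixes Q :: "'a::semiring_1^'n^'n"
  assumes "invertible Q"
  shows "conj_by Q (X ** Y) = conj_by Q X ** conj_by Q Y"
  using matrix_inv_left[OF assms]
  by (simp add: conj_by_def matrix_mul_assoc) (metis matrix_mul_assoc matrix_mul_rid)

lemma conj_by_mat_1:
  fixes Q :: "'a::semiring_1^'n^'n"
  assumes "invertible Q"
  shows "conj_by Q (mat 1) = mat 1"
  using matrix_inv_right[OF assms] by (simp add: conj_by_def)

lemma matrix_inv_conj_by:
  fixes Q :: "'a::semiring_1^'n^'n"
  assumes "invertible Q" and "invertible X"
  shows "matrix_inv (conj_by Q X) = conj_by Q (matrix_inv X)"
  by (rule matrix_inv_unique)
    (simp_all add: assms conj_by_mult[symmetric] matrix_inv_left matrix_inv_right conj_by_mat_1)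

lemma commutator_conj_by:
  assumes "invertible Q" and "invertible X" and "invertible Y"
  shows "commutator (conj_by Q X) (conj_by Q Y) = conj_by Q (commutator X Y)"
  by (simp add: commutator_def assms matrix_inv_conj_by conj_by_mult)

lemma commutator_eq_square:
  assumes "invertible X" and "invertible S" and "X ** S ** X = S"
  shows "commutator X S = X ** X"
proof -
  have "X ** S = S ** matrix_inv X"
    by (metis assms(1,3) matrix_inv_right matrix_mul_assoc matrix_mul_rid)
  then have "commutator X S = X ** (X ** (S ** matrix_inv S))"
    by (simp add: commutator_def matrix_mul_assoc)
  then show ?thesis by (simp add: matrix_inv_right[OF assms(2)])
qed

lemma mat2_of_nth [simp]:
  "mat2_of a b c d $ 1 $ 1 = a" "mat2_of a b c d $ 1 $ 2 = b"
  "mat2_of a b c d $ 2 $ 1 = c" "mat2_of a b c d $ 2 $ 2 = d"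
  by (simp_all add: mat2_of_def)

lemma mat2_cases:
  obtains a b c d where "A = mat2_of a b c d"
proof
  show "A = mat2_of (A$1$1) (A$1$2) (A$2$1) (A$2$2)"
    unfolding mat2_of_def vec_eq_iff forall_2 by simp
qed

lemma mat2_of_eq_iff:
  "mat2_of a b c d = mat2_of a' b' c' d' \<longleftrightarrow> a = a' \<and> b = b' \<and> c = c' \<and> d = d'"
  by (metis mat2_of_nth)

lemma mat2_of_mult:
  "mat2_of a b c d ** mat2_of a' b' c' d' =
     mat2_of (a*a' + b*c') (a*b' + b*d') (c*a' + d*c') (c*b' + d*d')"
  unfolding matrix_matrix_mult_def vec_eq_iff forall_2 by (simp add: sum_2 mat2_of_def)

lemma mat_1_eq_mat2_of: "mat 1 = mat2_of 1 0 0 1"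
  unfolding mat_def vec_eq_iff forall_2 by (simp add: mat2_of_def)

lemma det_mat2_of: "det (mat2_of a b c d) = a*d - b*c"
  by (simp add: det_2)

lemma mat2_of_adjugate_inverse:
  assumes "a*d - b*c = 1"
  shows "mat2_of a b c d ** mat2_of d (-b) (-c) a = mat 1"
    and "mat2_of d (-b) (-c) a ** mat2_of a b c d = mat 1"
  using assms by (simp_all add: mat2_of_mult mat_1_eq_mat2_of mat2_of_eq_iff algebra_simps)

lemma matrix_inv_mat2_of:
  assumes "a*d - b*c = 1"
  shows "matrix_inv (mat2_of a b c d) = mat2_of d (-b) (-c) a"
  using mat2_of_adjugate_inverse[OF assms] by (rule matrix_inv_unique)

lemma SL2Z_invertible:
  assumes "A \<in> SL2Z"
  shows "invertible A"
proof -
  obtain a b c d where A: "A = mat2_of a b c d" by (rule mat2_cases)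
  then have "a*d - b*c = 1" using assms by (simp add: SL2Z_def det_mat2_of)
  then show ?thesis
    unfolding A invertible_def using mat2_of_adjugate_inverse by blast
qed

lemma SL2Z_mult: "A \<in> SL2Z \<Longrightarrow> B \<in> SL2Z \<Longrightarrow> A ** B \<in> SL2Z"
  by (simp add: SL2Z_def det_mul)

lemma SL2Z_matrix_inv:
  assumes "A \<in> SL2Z"
  shows "matrix_inv A \<in> SL2Z"
  using det_mul_det_matrix_inv[OF SL2Z_invertible[OF assms]] assms by (simp add: SL2Z_def)

lemma SL2Z_conj_by: "Q \<in> SL2Z \<Longrightarrow> X \<in> SL2Z \<Longrightarrow> conj_by Q X \<in> SL2Z"
  by (simp add: conj_by_def SL2Z_mult SL2Z_matrix_inv)

lemma matpow_0 [simp]: "matpow A 0 = mat 1"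
  by (simp add: matpow_def)

lemma matpow_Suc: "matpow A (Suc n) = A ** matpow A n"
  by (simp add: matpow_def)

lemma matpow_add: "matpow A (m + n) = matpow A m ** matpow A n"
  by (induction m) (simp_all add: matpow_Suc matrix_mul_assoc)

lemma matpow_Suc_right: "matpow A (Suc n) = matpow A n ** A"
  using matpow_add[of A n 1] by (simp add: matpow_Suc)

lemma matpow_mult: "matpow A (m * n) = matpow (matpow A m) n"
  by (induction n) (simp_all add: matpow_add matpow_Suc)

lemma invertible_matpow: "invertible A \<Longrightarrow> invertible (matpow A n)"
  by (induction n) (simp_all add: matpow_Suc invertible_mult, auto simp: invertible_def)

lemma SL2Z_matpow: "A \<in> SL2Z \<Longrightarrow> matpow A n \<in> SL2Z"
  by (induction n) (simp_all add: matpow_Suc SL2Z_mult, simp add: SL2Z_def)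

lemma matpow_Tmat: "matpow Tmat n = mat2_of 1 (int n) 0 1"
  by (induction n) (simp_all add: matpow_Suc mat_1_eq_mat2_of Tmat_def mat2_of_mult add.commute)

lemma matpow_sandwich:
  assumes "A ** S ** A = S"
  shows "matpow A n ** S ** matpow A n = S"
proof (induction n)
  case (Suc n)
  have "matpow A (Suc n) ** S ** matpow A (Suc n) = A ** (matpow A n ** S ** matpow A n) ** A"
    by (metis matpow_Suc matpow_Suc_right matrix_mul_assoc)
  then show ?case by (simp add: Suc assms)
qed simp

lemma mprod_append: "mprod (xs @ ys) = mprod xs ** mprod ys"
  by (induction xs) (simp_all add: mprod_def matrix_mul_assoc)

lemma mprod_snoc: "mprod (xs @ [x]) = mprod xs ** x"
  by (simp add: mprod_append) (simp add: mprod_def)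

lemma mprod_conj_by_matpow:
  assumes "invertible Q"
  shows "mprod (map (\<lambda>i. conj_by (matpow Q i) C) [0..<n]) ** matpow Q n = matpow (C ** Q) n"
proof (induction n)
  case 0
  show ?case by (simp add: mprod_def)
next
  case (Suc n)
  have inv: "matrix_inv (matpow Q n) ** matpow Q n = mat 1"
    by (simp add: matrix_inv_left invertible_matpow assms)
  have "mprod (map (\<lambda>i. conj_by (matpow Q i) C) [0..<Suc n]) ** matpow Q (Suc n)
      = mprod (map (\<lambda>i. conj_by (matpow Q i) C) [0..<n]) ** matpow Q n
          ** C ** (matrix_inv (matpow Q n) ** matpow Q n) ** Q"
    by (simp add: mprod_snoc conj_by_def matpow_Suc_right matrix_mul_assoc)
  also have "\<dots> = matpow (C ** Q) (Suc n)"
    by (simp add: inv Suc matpow_Suc_right matrix_mul_assoc)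
  finally show ?case .
qed

definition Pmat :: mat2 where "Pmat = mat2_of 1 1 1 2"
definition Smat :: mat2 where "Smat = mat2_of 0 (-1) 1 0"
definition Xmat :: mat2 where "Xmat = mat2_of (-9) 7 (-4) 3"
definition Ymat :: mat2 where "Ymat = mat2_of (-5) 8 (-7) 11"

lemma witnesses_SL2Z: "Pmat \<in> SL2Z" "Smat \<in> SL2Z" "Xmat \<in> SL2Z" "Ymat \<in> SL2Z"
  by (simp_all add: SL2Z_def det_mat2_of Pmat_def Smat_def Xmat_def Ymat_def)

lemma commutator_Xmat_Ymat: "commutator Xmat Ymat ** matpow Pmat 2 = matpow Tmat 12"
  by (simp add: commutator_def Xmat_def Ymat_def Pmat_def matrix_inv_mat2_of mat2_of_mult
      matpow_Tmat numeral_2_eq_2 matpow_Suc mat_1_eq_mat2_of)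

lemma Pmat_Smat_Pmat: "Pmat ** Smat ** Pmat = Smat"
  by (simp add: Pmat_def Smat_def mat2_of_mult)

lemma commutator_matpow_Pmat_Smat: "commutator (matpow Pmat n) Smat = matpow (matpow Pmat 2) n"
proof -
  have "commutator (matpow Pmat n) Smat = matpow Pmat n ** matpow Pmat n"
    by (intro commutator_eq_square SL2Z_invertible SL2Z_matpow matpow_sandwich
        witnesses_SL2Z Pmat_Smat_Pmat)
  then show ?thesis by (simp add: matpow_add[symmetric] matpow_mult[symmetric] mult_2)
qed

theorem mainTheorem10:
  fixes k :: nat
  assumes "k \<ge> 1"
  shows "matpow Tmat (12 * k) = mat2_of 1 (12 * int k) 0 1 \<and>
         (\<exists>Xs Ys. length Xs = k + 1 \<and> length Ys = k + 1 \<and>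
            set Xs \<subseteq> SL2Z \<and> set Ys \<subseteq> SL2Z \<and>
            matpow Tmat (12 * k) = mprod (map2 commutator Xs Ys))"
proof
  show "matpow Tmat (12 * k) = mat2_of 1 (12 * int k) 0 1" by (simp add: matpow_Tmat)
  define Q where "Q = matpow Pmat 2"
  have Q: "Q \<in> SL2Z" "invertible Q"
    by (simp_all add: Q_def SL2Z_matpow SL2Z_invertible witnesses_SL2Z)
  define Xs where "Xs = map (\<lambda>i. conj_by (matpow Q i) Xmat) [0..<k] @ [matpow Pmat k]"
  define Ys where "Ys = map (\<lambda>i. conj_by (matpow Q i) Ymat) [0..<k] @ [Smat]"
  have sets: "set Xs \<subseteq> SL2Z" "set Ys \<subseteq> SL2Z"
    by (auto simp: Xs_def Ys_def Q SL2Z_conj_by SL2Z_matpow witnesses_SL2Z)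
  have "map2 commutator Xs Ys
      = map (\<lambda>i. conj_by (matpow Q i) (commutator Xmat Ymat)) [0..<k] @ [matpow Q k]"
    by (simp add: Xs_def Ys_def zip_map1 zip_map2 zip_same_conv_map comp_def commutator_conj_by
        invertible_matpow Q SL2Z_invertible witnesses_SL2Z commutator_matpow_Pmat_Smat Q_def)
  then have "mprod (map2 commutator Xs Ys) = matpow (commutator Xmat Ymat ** Q) k"
    by (simp add: mprod_snoc mprod_conj_by_matpow Q)
  also have "\<dots> = matpow Tmat (12 * k)"
    by (simp add: Q_def commutator_Xmat_Ymat matpow_mult)
  finally show "\<exists>Xs Ys. length Xs = k + 1 \<and> length Ys = k + 1 \<and>
      set Xs \<subseteq> SL2Z \<and> set Ys \<subseteq> SL2Z \<and> matpow Tmat (12 * k) = mprod (map2 commutator Xs Ys)"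
    using sets by (intro exI[of _ Xs] exI[of _ Ys]) (simp add: Xs_def Ys_def)
qed

end
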